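(* Let $P$ be a finite set of points in the plane in general position with $|P|$ even, and let $A\subseteq P$ be the union of the vertex sets of some connected components of the underlying graph of $P$. Then $|A|$ is even, and for any two points $a,b\in A$, the line through $a$ and $b$ is a halving line of the point set $A$ if and only if it is a halving line of $P$. Equivalently, the underlying graph of the point set $A$ equals the subgraph of the underlying graph of $P$ induced on $A$.
   Context: Points are in general position if no three are collinear. For a finite set $P$ of $n$ points in general position with $n$ even, a halving line of $P$ is a line through two points of $P$ that has exactly $(n-2)/2$ points of $P$ strictly on each side. The underlying graph of $P$ has vertex set $P$, and two points are adjacent if and only if the line through them is a halving line of $P$. *)

theory Defs
  imports Complex_Main
begin

type_synonym point = "real \<times> real"

text \<open>Orientation: positive iff c lies strictly left of the directed line a->b,
negative iff strictly right, zero iff a, b, c are collinear.\<close>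
definition orient :: "point \<Rightarrow> point \<Rightarrow> point \<Rightarrow> real" where
  "orient a b c = (fst b - fst a) * (snd c - snd a) - (snd b - snd a) * (fst c - fst a)"

definition general_position :: "point set \<Rightarrow> bool" where
  "general_position P \<longleftrightarrow>
     (\<forall>a\<in>P. \<forall>b\<in>P. \<forall>c\<in>P. a \<noteq> b \<and> a \<noteq> c \<and> b \<noteq> c \<longrightarrow> orient a b c \<noteq> 0)"

definition halving_line :: "point set \<Rightarrow> point \<Rightarrow> point \<Rightarrow> bool" where
  "halving_line P a b \<longleftrightarrow> a \<in> P \<and> b \<in> P \<and> a \<noteq> b \<and>
     2 * card {c \<in> P. orient a b c > 0} + 2 = card P \<and>
     2 * card {c \<in> P. orient a b c < 0} + 2 = card P"

definition underlying_adj :: "point set \<Rightarrow> point \<Rightarrow> point \<Rightarrow> bool" where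
  "underlying_adj P a b \<longleftrightarrow> halving_line P a b"

definition component :: "point set \<Rightarrow> point \<Rightarrow> point set" where
  "component P x = {y. (underlying_adj P)\<^sup>*\<^sup>* x y}"

definition components :: "point set \<Rightarrow> point set set" where
  "components P = component P ` P"

end

theory Submission
  imports Defs
begin

(*
  Order P by a generic linear functional \<open>dot u\<close> and let L(u) be its first |P|/2 points.
  As the direction u rotates, L(u) changes only when u becomes orthogonal to a segment pq, and
  then at most by exchanging p and q; this happens only when p and q are the two middle points,
  that is, when pq is a halving line of P.  Then p and q lie in the same component, so both or
  neither belong to A, and |A \<inter> L(u)| does not change.  A half turn replaces L(u) by its
  complement, hence |A \<inter> L(u)| = |A| / 2.  Finally, for a, b \<in> A, tilting the normal of ab
  slightly makes a and b the points ranked right after those strictly on one side of ab;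
  comparing the two halves shows that ab halves A exactly when it halves P.
*)

section \<open>Ranks and lower halves\<close>

definition rank :: "('a \<Rightarrow> real) \<Rightarrow> 'a set \<Rightarrow> 'a \<Rightarrow> nat" where
  "rank F P x = card {y\<in>P. F y < F x}"

definition lower_half :: "('a \<Rightarrow> real) \<Rightarrow> 'a set \<Rightarrow> 'a set" where
  "lower_half F P = {x\<in>P. 2 * rank F P x < card P}"

definition refines :: "('a \<Rightarrow> real) \<Rightarrow> ('a \<Rightarrow> real) \<Rightarrow> 'a set \<Rightarrow> bool" where
  "refines F G P \<longleftrightarrow> (\<forall>x\<in>P. \<forall>y\<in>P. G x < G y \<longrightarrow> F x < F y)"

definition no_triple_ties :: "('a \<Rightarrow> real) \<Rightarrow> 'a set \<Rightarrow> bool" where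
  "no_triple_ties F P \<longleftrightarrow>
     (\<forall>x\<in>P. \<forall>y\<in>P. \<forall>z\<in>P. x \<noteq> y \<and> x \<noteq> z \<and> y \<noteq> z \<longrightarrow> F x \<noteq> F y \<or> F x \<noteq> F z)"

definition median_ties_closed :: "'a set \<Rightarrow> ('a \<Rightarrow> real) \<Rightarrow> 'a set \<Rightarrow> bool" where
  "median_ties_closed A F P \<longleftrightarrow>
     (\<forall>x\<in>P. \<forall>y\<in>P. x \<noteq> y \<and> F x = F y \<and> 2 * rank F P x + 2 = card P \<longrightarrow> (x \<in> A \<longleftrightarrow> y \<in> A))"

lemma no_triple_tiesD:
  assumes "no_triple_ties F P" "x \<in> P" "y \<in> P" "z \<in> P" "x \<noteq> y" "x \<noteq> z" "y \<noteq> z"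
    and "F x = F y" "F x = F z"
  shows False
  using assms unfolding no_triple_ties_def by blast

lemma median_ties_closedD:
  assumes "median_ties_closed A F P" "x \<in> P" "y \<in> P" "x \<noteq> y" "F x = F y"
    and "2 * rank F P x + 2 = card P"
  shows "x \<in> A \<longleftrightarrow> y \<in> A"
  using assms unfolding median_ties_closed_def by blast

lemma rank_refines:
  assumes "finite P" "refines F G P" "x \<in> P"
  shows "rank F P x = rank G P x + card {z\<in>P. z \<noteq> x \<and> G z = G x \<and> F z < F x}"
proof -
  have "{z\<in>P. F z < F x} = {z\<in>P. G z < G x} \<union> {z\<in>P. z \<noteq> x \<and> G z = G x \<and> F z < F x}"
    using assms(2,3) unfolding refines_def by (auto simp: not_less_iff_gr_or_eq) (meson less_asym)+
  moreover have "card ({z\<in>P. G z < G x} \<union> {z\<in>P. z \<noteq> x \<and> G z = G x \<and> F z < F x}) =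
      card {z\<in>P. G z < G x} + card {z\<in>P. z \<noteq> x \<and> G z = G x \<and> F z < F x}"
    by (rule card_Un_disjoint) (use assms(1) in auto)
  ultimately show ?thesis unfolding rank_def by simp
qed

lemma rank_refines_untied:
  assumes "finite P" "refines F G P" "x \<in> P" "\<And>z. z \<in> P \<Longrightarrow> z \<noteq> x \<Longrightarrow> G z \<noteq> G x"
  shows "rank F P x = rank G P x"
  using rank_refines[OF assms(1-3)] assms(4) by (auto simp: card_eq_0_iff)

lemma rank_refines_tied:
  assumes "finite P" "refines F G P" "no_triple_ties G P"
    and "x \<in> P" "y \<in> P" "x \<noteq> y" "G x = G y"
  shows "rank F P x = rank G P x + (if F y < F x then 1 else 0)"
proof -
  have "{z\<in>P. z \<noteq> x \<and> G z = G x \<and> F z < F x} = (if F y < F x then {y} else {})"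
    using assms(3-7) unfolding no_triple_ties_def by (auto, metis+)
  then show ?thesis using rank_refines[OF assms(1,2,4)] by simp
qed

lemma rank_eq_imp_eq:
  assumes "finite P" "x \<in> P" "y \<in> P" "rank G P x = rank G P y"
  shows "G x = G y"
proof (rule ccontr)
  have less: "rank G P x < rank G P y" if "x \<in> P" "y \<in> P" "G x < G y" for x y
    unfolding rank_def by (rule psubset_card_mono) (use assms(1) that in auto)
  assume "G x \<noteq> G y"
  then show False using less[of x y] less[of y x] assms by (auto simp: neq_iff)
qed

text \<open>A refinement can raise the rank of a point by at most its one tie partner, which only
  matters for membership in the lower half when the point sits at the median.\<close>
lemma lower_half_refines_iff:
  assumes "finite P" "even (card P)" "refines F G P" "no_triple_ties G P" "z \<in> P"
    and "\<And>z'. z' \<in> P \<Longrightarrow> z' \<noteq> z \<Longrightarrow> G z' = G z \<Longrightarrow> 2 * rank G P z + 2 \<noteq> card P"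
  shows "z \<in> lower_half F P \<longleftrightarrow> 2 * rank G P z < card P"
proof (cases "\<exists>z'\<in>P. z' \<noteq> z \<and> G z' = G z")
  case True
  then obtain z' where "z' \<in> P" "z' \<noteq> z" "G z' = G z" by blast
  then have "2 * rank G P z + 2 \<noteq> card P" using assms(6) by blast
  with assms(2) rank_refines_tied[OF assms(1,3,4,5) \<open>z' \<in> P\<close> \<open>z' \<noteq> z\<close>[symmetric]]
    \<open>G z' = G z\<close> assms(5) show ?thesis
    unfolding lower_half_def by (cases "F z' < F z") (auto elim!: evenE)
next
  case False
  then have "rank F P z = rank G P z" using rank_refines_untied[OF assms(1,3,5)] by blast
  then show ?thesis using assms(5) unfolding lower_half_def by simp
qed

lemma lower_half_swap_at_median_tie:
  assumes "finite P" "even (card P)" "refines Fl G P" "refines Fr G P" "no_triple_ties G P"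
    and "p \<in> P" "q \<in> P" "p \<noteq> q" "G p = G q" "2 * rank G P p + 2 = card P"
    and "Fl p < Fl q" "Fr q < Fr p"
  shows "p \<in> lower_half Fl P" "q \<notin> lower_half Fl P"
    and "lower_half Fr P = insert q (lower_half Fl P - {p})"
proof -
  have rank_q: "rank G P q = rank G P p" unfolding rank_def using assms(9) by simp
  have "rank Fl P p = rank G P p"
    using rank_refines_tied[OF assms(1,3,5,6,7,8,9)] assms(11) by simp
  moreover have "rank Fl P q = rank G P p + 1"
    using rank_refines_tied[OF assms(1,3,5,7,6) assms(8)[symmetric] assms(9)[symmetric]]
      assms(11) rank_q
    by simp
  moreover have "rank Fr P p = rank G P p + 1"
    using rank_refines_tied[OF assms(1,4,5,6,7,8,9)] assms(12) by simp
  moreover have "rank Fr P q = rank G P p"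
    using rank_refines_tied[OF assms(1,4,5,7,6) assms(8)[symmetric] assms(9)[symmetric]]
      assms(12) rank_q
    by simp
  ultimately have p_q: "p \<in> lower_half Fl P" "q \<notin> lower_half Fl P"
      "q \<in> lower_half Fr P" "p \<notin> lower_half Fr P"
    using assms(6,7,10) unfolding lower_half_def by auto
  have others: "z \<in> lower_half Fl P \<longleftrightarrow> z \<in> lower_half Fr P"
    if "z \<in> P" "z \<noteq> p" "z \<noteq> q" for z
  proof -
    have untied: "2 * rank G P z + 2 \<noteq> card P" if "z' \<in> P" "z' \<noteq> z" "G z' = G z" for z'
    proof
      assume "2 * rank G P z + 2 = card P"
      then have "G z = G p" using rank_eq_imp_eq[OF assms(1) \<open>z \<in> P\<close> assms(6)] assms(10) by simp
      then show False
        using no_triple_tiesD[OF assms(5) \<open>z \<in> P\<close> assms(6,7) \<open>z \<noteq> p\<close> \<open>z \<noteq> q\<close> assms(8)] assms(9)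
        by simp
    qed
    have "z \<in> lower_half Fl P \<longleftrightarrow> 2 * rank G P z < card P"
      by (intro lower_half_refines_iff[OF assms(1-3,5) that(1)] untied)
    moreover have "z \<in> lower_half Fr P \<longleftrightarrow> 2 * rank G P z < card P"
      by (intro lower_half_refines_iff[OF assms(1,2,4,5) that(1)] untied)
    ultimately show ?thesis by simp
  qed
  show "p \<in> lower_half Fl P" "q \<notin> lower_half Fl P" using p_q(1,2) by simp_all
  show "lower_half Fr P = insert q (lower_half Fl P - {p})"
    using p_q others unfolding lower_half_def by blast
qed

text \<open>The lower half changes only by swapping the two points of a tie of \<open>G\<close> at the median,
  and these are both in \<open>A\<close> or both outside it.\<close>
lemma card_lower_half_tie_swap:
  assumes "finite P" "A \<subseteq> P" "even (card P)" "inj_on Fl P"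
    and "refines Fl G P" "refines Fr G P" "no_triple_ties G P" "median_ties_closed A G P"
    and flip: "\<And>x y. x \<in> P \<Longrightarrow> y \<in> P \<Longrightarrow> x \<noteq> y \<Longrightarrow> G x = G y \<Longrightarrow> Fl x < Fl y \<Longrightarrow> Fr y < Fr x"
  shows "card (A \<inter> lower_half Fl P) = card (A \<inter> lower_half Fr P)"
proof (cases "\<exists>x\<in>P. \<exists>y\<in>P. x \<noteq> y \<and> G x = G y \<and> 2 * rank G P x + 2 = card P")
  case False
  have "z \<in> lower_half Fl P \<longleftrightarrow> z \<in> lower_half Fr P" if "z \<in> P" for z
  proof -
    have untied: "2 * rank G P z + 2 \<noteq> card P" if "z' \<in> P" "z' \<noteq> z" "G z' = G z" for z'
    proof -
      have "z \<noteq> z'" "G z = G z'" using that by auto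
      then show ?thesis using False \<open>z \<in> P\<close> \<open>z' \<in> P\<close> by blast
    qed
    have "z \<in> lower_half Fl P \<longleftrightarrow> 2 * rank G P z < card P"
      by (intro lower_half_refines_iff[OF assms(1,3,5,7) that] untied)
    moreover have "z \<in> lower_half Fr P \<longleftrightarrow> 2 * rank G P z < card P"
      by (intro lower_half_refines_iff[OF assms(1,3,6,7) that] untied)
    ultimately show ?thesis by simp
  qed
  note same = this
  have "lower_half Fl P = lower_half Fr P"
  proof (rule set_eqI)
    fix z show "z \<in> lower_half Fl P \<longleftrightarrow> z \<in> lower_half Fr P"
      using same[of z] by (cases "z \<in> P") (simp_all add: lower_half_def)
  qed
  then show ?thesis by simp
next
  case True
  then obtain x y where xy: "x \<in> P" "y \<in> P" "x \<noteq> y" "G x = G y" "2 * rank G P x + 2 = card P"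
    by blast
  have "rank G P y = rank G P x" unfolding rank_def using xy(4) by simp
  moreover have "Fl x \<noteq> Fl y" using assms(4) xy(1-3) unfolding inj_on_def by blast
  ultimately obtain p q where pq: "p \<in> P" "q \<in> P" "p \<noteq> q" "G p = G q"
      "2 * rank G P p + 2 = card P" "Fl p < Fl q"
  proof (cases "Fl x < Fl y")
    case True then show ?thesis using that xy by blast
  next
    case False
    then have "Fl y < Fl x" using \<open>Fl x \<noteq> Fl y\<close> by simp
    then show ?thesis using xy \<open>rank G P y = rank G P x\<close> by (intro that[of y x]) simp_all
  qed
  note swap = lower_half_swap_at_median_tie[OF assms(1,3,5,6,7) pq flip[OF pq(1-4,6)]]
  have pq_A: "p \<in> A \<longleftrightarrow> q \<in> A" using median_ties_closedD[OF assms(8) pq(1-5)] .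
  show ?thesis
  proof (cases "p \<in> A")
    case True
    have "A \<inter> lower_half Fr P = insert q (A \<inter> lower_half Fl P - {p})"
      using swap(3) True pq_A by blast
    moreover have "q \<notin> A \<inter> lower_half Fl P - {p}" using swap(2) by blast
    moreover have "finite (A \<inter> lower_half Fl P)" using assms(1,2) finite_subset by blast
    moreover have "p \<in> A \<inter> lower_half Fl P" using swap(1) True by blast
    then have "card (A \<inter> lower_half Fl P) = Suc (card (A \<inter> lower_half Fl P - {p}))"
      using \<open>finite (A \<inter> lower_half Fl P)\<close> by (rule card.remove[rotated])
    ultimately show ?thesis by simp
  next
    case False
    then have "A \<inter> lower_half Fr P = A \<inter> lower_half Fl P" using swap(3) pq_A by auto
    then show ?thesis by simp
  qed
qed

lemma lower_half_uminus:
  assumes "finite P" "inj_on F P" "even (card P)"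
  shows "lower_half (\<lambda>x. - F x) P = P - lower_half F P"
proof -
  obtain k where k: "card P = 2 * k" using assms(3) by blast
  have "rank F P x + rank (\<lambda>x. - F x) P x + 1 = card P" if "x \<in> P" for x
  proof -
    have "{y\<in>P. F y < F x} \<union> {y\<in>P. - F y < - F x} = P - {x}"
      using assms(2) that unfolding inj_on_def by (auto, metis not_less_iff_gr_or_eq)
    moreover have "card ({y\<in>P. F y < F x} \<union> {y\<in>P. - F y < - F x}) =
        card {y\<in>P. F y < F x} + card {y\<in>P. - F y < - F x}"
      by (rule card_Un_disjoint) (use assms(1) in auto)
    moreover have "card (P - {x}) + 1 = card P"
    proof -
      have "card P > 0" using assms(1) that card_gt_0_iff by blast
      then show ?thesis using that by (simp add: card_Diff_singleton)
    qed
    ultimately show ?thesis unfolding rank_def by simp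
  qed
  then have "2 * rank (\<lambda>x. - F x) P x < card P \<longleftrightarrow> \<not> 2 * rank F P x < card P" if "x \<in> P" for x
    using that k by fastforce
  then show ?thesis unfolding lower_half_def by blast
qed

lemma card_split_at_level:
  fixes F :: "'a \<Rightarrow> real"
  assumes "finite P" "p \<in> P" "q \<in> P" "p \<noteq> q" "\<And>c. c \<in> P \<Longrightarrow> F c = t \<longleftrightarrow> c = p \<or> c = q"
  shows "card {c\<in>P. F c < t} + card {c\<in>P. t < F c} + 2 = card P"
proof -
  have "F c < t \<or> t < F c" if "c \<in> P" "c \<noteq> p" "c \<noteq> q" for c
    using assms(5)[OF that(1)] that(2,3) by (simp add: neq_iff)
  then have "P = ({c\<in>P. F c < t} \<union> {c\<in>P. t < F c}) \<union> {p, q}"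
    using assms(2,3) by blast
  moreover have "card ({c\<in>P. F c < t} \<union> {c\<in>P. t < F c}) = card {c\<in>P. F c < t} + card {c\<in>P. t < F c}"
    by (rule card_Un_disjoint) (use assms(1) in auto)
  moreover have "card (({c\<in>P. F c < t} \<union> {c\<in>P. t < F c}) \<union> {p, q}) =
      card ({c\<in>P. F c < t} \<union> {c\<in>P. t < F c}) + card {p, q}"
    by (rule card_Un_disjoint) (use assms(1-3,5) in auto)
  ultimately show ?thesis using assms(4) by simp
qed

lemma rank_refines_at_level_pair:
  fixes F G :: "'a \<Rightarrow> real"
  assumes "finite P" "refines F G P" "x \<in> P" "y \<in> P" "F x < F y"
    and level: "\<And>c. c \<in> P \<Longrightarrow> G c = G x \<longleftrightarrow> c = x \<or> c = y"
  defines "T \<equiv> {c\<in>P. G c < G x}"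
  shows "rank F P x = card T" "rank F P y = card T + 1"
    and "\<And>c. c \<in> T \<Longrightarrow> rank F P c < card T"
    and "\<And>c. c \<in> P \<Longrightarrow> G x < G c \<Longrightarrow> card T + 2 \<le> rank F P c"
proof -
  have refines: "F c < F z" if "c \<in> P" "z \<in> P" "G c < G z" for c z
    using assms(2) that unfolding refines_def by blast
  have "G y = G x" using level assms(4) by blast
  have fin_T: "finite T" "x \<notin> T" "y \<notin> T" "x \<noteq> y"
    unfolding T_def using assms(1,5) \<open>G y = G x\<close> by auto
  have rank_G: "rank G P x = card T" "rank G P y = card T"
    unfolding rank_def T_def \<open>G y = G x\<close> by simp_all
  have ties: "{z\<in>P. z \<noteq> x \<and> G z = G x \<and> F z < F x} = {}"
    "{z\<in>P. z \<noteq> y \<and> G z = G y \<and> F z < F y} = {x}"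
    using level assms(3,5) \<open>G y = G x\<close> by auto
  show "rank F P x = card T" "rank F P y = card T + 1"
    using rank_refines[OF assms(1,2,3)] rank_refines[OF assms(1,2,4)]
    unfolding ties rank_G by simp_all
  show "rank F P c < card T" if "c \<in> T" for c
  proof -
    have "{z\<in>P. F z < F c} \<subseteq> T - {c}"
    proof
      fix z assume z: "z \<in> {z\<in>P. F z < F c}"
      have "c \<in> P" "G c < G x" using that unfolding T_def by auto
      have "\<not> G c < G z" using refines[OF \<open>c \<in> P\<close>, of z] z by auto
      then show "z \<in> T - {c}" using z \<open>G c < G x\<close> unfolding T_def by auto
    qed
    then have "rank F P c \<le> card (T - {c})" unfolding rank_def using fin_T by (simp add: card_mono)
    also have "\<dots> < card T" using fin_T(1) that by (rule card_Diff1_less)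
    finally show ?thesis .
  qed
  show "card T + 2 \<le> rank F P c" if "c \<in> P" "G x < G c" for c
  proof -
    have "insert x (insert y T) \<subseteq> {z\<in>P. F z < F c}"
    proof
      fix z assume "z \<in> insert x (insert y T)"
      then have "z \<in> P" "G z < G c" using that assms(3,4) \<open>G y = G x\<close> unfolding T_def by auto
      then show "z \<in> {z\<in>P. F z < F c}" using refines[OF _ that(1)] by blast
    qed
    then have "card (insert x (insert y T)) \<le> rank F P c"
      unfolding rank_def using assms(1) by (simp add: card_mono)
    then show ?thesis using fin_T \<open>x \<noteq> y\<close> by simp
  qed
qed

text \<open>In \<open>F\<close> the two points of the level come right after the points strictly below it, so the
  lower half of \<open>F\<close> tells how that level sits relative to the median of \<open>P\<close>, and of \<open>A\<close>.\<close>
lemma card_inter_below_level: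
  fixes F G :: "'a \<Rightarrow> real"
  assumes "finite P" "A \<subseteq> P" "refines F G P" "x \<in> A" "y \<in> A" "F x < F y"
    and level: "\<And>c. c \<in> P \<Longrightarrow> G c = G x \<longleftrightarrow> c = x \<or> c = y"
    and half: "2 * card (A \<inter> lower_half F P) = card A"
  defines "T \<equiv> {c\<in>P. G c < G x}"
  shows "2 * card T + 2 = card P \<Longrightarrow> 2 * card (A \<inter> T) + 2 = card A"
    and "2 * card T + 2 < card P \<Longrightarrow> 2 * card (A \<inter> T) + 2 < card A"
proof -
  have "x \<in> P" "y \<in> P" "x \<noteq> y" using assms(2,4-6) by auto
  note ranks = rank_refines_at_level_pair[OF assms(1,3) \<open>x \<in> P\<close> \<open>y \<in> P\<close> assms(6) level]
  have "x \<notin> T" "y \<notin> T" unfolding T_def using level[OF \<open>y \<in> P\<close>] by auto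
  have fin: "finite (A \<inter> T)" "finite (A \<inter> lower_half F P)" using assms(1,2) finite_subset by auto
  have classify: "c \<in> T \<or> c = x \<or> c = y \<or> G x < G c" if "c \<in> P" for c
    using level[OF that] that unfolding T_def by (auto simp: not_less_iff_gr_or_eq)
  show "2 * card (A \<inter> T) + 2 = card A" if median: "2 * card T + 2 = card P"
  proof -
    have "A \<inter> lower_half F P = insert x (A \<inter> T)"
    proof (intro set_eqI iffI)
      fix c assume c: "c \<in> A \<inter> lower_half F P"
      then have "c \<in> P" "2 * rank F P c < card P" unfolding lower_half_def by auto
      then show "c \<in> insert x (A \<inter> T)"
        using classify[of c] ranks(2) ranks(4)[of c] c median unfolding T_def by auto
    next
      fix c assume "c \<in> insert x (A \<inter> T)"
      then show "c \<in> A \<inter> lower_half F P"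
        using ranks(1) ranks(3)[of c] assms(2,4) median \<open>x \<in> P\<close>
        unfolding lower_half_def T_def by auto
    qed
    then show ?thesis using half fin \<open>x \<notin> T\<close> by simp
  qed
  show "2 * card (A \<inter> T) + 2 < card A" if "2 * card T + 2 < card P"
  proof -
    have "insert x (insert y (A \<inter> T)) \<subseteq> A \<inter> lower_half F P"
    proof
      fix c assume "c \<in> insert x (insert y (A \<inter> T))"
      moreover have "2 * rank F P c < card P" if "c \<in> T"
        using ranks(3)[of c] that \<open>2 * card T + 2 < card P\<close> unfolding T_def by simp
      ultimately show "c \<in> A \<inter> lower_half F P"
        using ranks(1,2) assms(2,4,5) \<open>2 * card T + 2 < card P\<close> \<open>x \<in> P\<close> \<open>y \<in> P\<close>
        unfolding lower_half_def T_def by auto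
    qed
    then have "card (insert x (insert y (A \<inter> T))) \<le> card (A \<inter> lower_half F P)"
      using fin by (simp add: card_mono)
    then show ?thesis using half fin \<open>x \<notin> T\<close> \<open>y \<notin> T\<close> \<open>x \<noteq> y\<close> by simp
  qed
qed

section \<open>Sweeping a pencil of functionals\<close>

definition pencil :: "('a \<Rightarrow> real) \<Rightarrow> ('a \<Rightarrow> real) \<Rightarrow> real \<Rightarrow> 'a \<Rightarrow> real" where
  "pencil \<alpha> \<beta> s x = \<alpha> x + s * \<beta> x"

definition crossings :: "('a \<Rightarrow> real) \<Rightarrow> ('a \<Rightarrow> real) \<Rightarrow> 'a set \<Rightarrow> real set" where
  "crossings \<alpha> \<beta> P = {s. \<exists>x\<in>P. \<exists>y\<in>P. x \<noteq> y \<and> pencil \<alpha> \<beta> s x = pencil \<alpha> \<beta> s y}"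

lemma inj_on_pencil_iff: "inj_on (pencil \<alpha> \<beta> s) P \<longleftrightarrow> s \<notin> crossings \<alpha> \<beta> P"
  unfolding inj_on_def crossings_def by blast

lemma finite_crossings:
  assumes "finite P" "\<And>x y. x \<in> P \<Longrightarrow> y \<in> P \<Longrightarrow> x \<noteq> y \<Longrightarrow> \<alpha> x \<noteq> \<alpha> y \<or> \<beta> x \<noteq> \<beta> y"
  shows "finite (crossings \<alpha> \<beta> P)"
proof (rule finite_subset)
  show "crossings \<alpha> \<beta> P \<subseteq> (\<lambda>(x, y). (\<alpha> y - \<alpha> x) / (\<beta> x - \<beta> y)) ` (P \<times> P)"
  proof
    fix s assume "s \<in> crossings \<alpha> \<beta> P"
    then obtain x y where xy: "x \<in> P" "y \<in> P" "x \<noteq> y" "\<alpha> x + s * \<beta> x = \<alpha> y + s * \<beta> y"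
      unfolding crossings_def pencil_def by blast
    then have "\<beta> x \<noteq> \<beta> y" using assms(2) by force
    then have "s = (\<alpha> y - \<alpha> x) / (\<beta> x - \<beta> y)" using xy(4) by (simp add: field_simps)
    then show "s \<in> (\<lambda>(x, y). (\<alpha> y - \<alpha> x) / (\<beta> x - \<beta> y)) ` (P \<times> P)" using xy by force
  qed
qed (use assms(1) in simp)

lemma pencil_order_stable:
  assumes "pencil \<alpha> \<beta> s x < pencil \<alpha> \<beta> s y"
    and "\<And>r. min s t \<le> r \<Longrightarrow> r \<le> max s t \<Longrightarrow> pencil \<alpha> \<beta> r x \<noteq> pencil \<alpha> \<beta> r y"
  shows "pencil \<alpha> \<beta> t x < pencil \<alpha> \<beta> t y"
proof (rule ccontr)
  define a b where "a = \<alpha> x - \<alpha> y" and "b = \<beta> x - \<beta> y"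
  have diff: "pencil \<alpha> \<beta> r x - pencil \<alpha> \<beta> r y = a + r * b" for r
    unfolding a_def b_def pencil_def by (simp add: algebra_simps)
  assume "\<not> ?thesis"
  then have s_neg: "a + s * b < 0" and t_nonneg: "0 \<le> a + t * b"
    using assms(1) diff[of s] diff[of t] by linarith+
  then have "b \<noteq> 0" by auto
  define r where "r = - a / b"
  have root: "a + r * b = 0" unfolding r_def using \<open>b \<noteq> 0\<close> by simp
  have "0 < (r - s) * b" "0 \<le> (t - r) * b"
    using root s_neg t_nonneg by (simp_all add: algebra_simps)
  then have "min s t \<le> r \<and> r \<le> max s t"
    by (cases "0 < b") (auto simp: zero_less_mult_iff zero_le_mult_iff)
  then show False using assms(2)[of r] diff[of r] root by auto
qed

lemma pencil_refines:
  assumes "\<And>r. min m t \<le> r \<Longrightarrow> r \<le> max m t \<Longrightarrow> r \<noteq> m \<Longrightarrow> r \<notin> crossings \<alpha> \<beta> P"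
  shows "refines (pencil \<alpha> \<beta> t) (pencil \<alpha> \<beta> m) P"
  unfolding refines_def
proof (intro ballI impI)
  fix x y assume "x \<in> P" "y \<in> P" and less: "pencil \<alpha> \<beta> m x < pencil \<alpha> \<beta> m y"
  show "pencil \<alpha> \<beta> t x < pencil \<alpha> \<beta> t y"
  proof (rule pencil_order_stable[OF less])
    fix r assume "min m t \<le> r" "r \<le> max m t"
    then show "pencil \<alpha> \<beta> r x \<noteq> pencil \<alpha> \<beta> r y"
      using assms[of r] less \<open>x \<in> P\<close> \<open>y \<in> P\<close> unfolding crossings_def by (cases "r = m") auto
  qed
qed

lemma pencil_tie_flip:
  assumes "l < m" "m < h" "pencil \<alpha> \<beta> m x = pencil \<alpha> \<beta> m y" "pencil \<alpha> \<beta> l x < pencil \<alpha> \<beta> l y"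
  shows "pencil \<alpha> \<beta> h y < pencil \<alpha> \<beta> h x"
proof -
  have "(l - m) * (\<beta> x - \<beta> y) < 0"
    using assms(3,4) unfolding pencil_def by (simp add: algebra_simps)
  then have "0 < \<beta> x - \<beta> y" using assms(1) by (simp add: mult_less_0_iff)
  then have "0 < (h - m) * (\<beta> x - \<beta> y)" using assms(2) by simp
  then show ?thesis using assms(3) unfolding pencil_def by (simp add: algebra_simps)
qed

lemma finite_gap_above:
  fixes X :: "real set"
  assumes "finite X" "m < h"
  shows "\<exists>s. m < s \<and> s < h \<and> (\<forall>t\<in>X. m < t \<longrightarrow> s < t)"
proof -
  define M where "M = Min (insert h {t\<in>X. m < t})"
  have "m < M" "M \<le> h" "\<forall>t\<in>X. m < t \<longrightarrow> M \<le> t"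
    unfolding M_def using assms by auto
  then show ?thesis by (intro exI[of _ "(m + M) / 2"]) auto
qed

lemma card_lower_half_pencil_step:
  assumes "finite P" "A \<subseteq> P" "even (card P)" "l < m" "m < h"
    and isolated: "\<And>t. l \<le> t \<Longrightarrow> t \<le> h \<Longrightarrow> t \<in> crossings \<alpha> \<beta> P \<Longrightarrow> t = m"
    and "no_triple_ties (pencil \<alpha> \<beta> m) P" "median_ties_closed A (pencil \<alpha> \<beta> m) P"
  shows "card (A \<inter> lower_half (pencil \<alpha> \<beta> l) P) = card (A \<inter> lower_half (pencil \<alpha> \<beta> h) P)"
proof (rule card_lower_half_tie_swap[OF assms(1-3) _ _ _ assms(7,8)])
  show "inj_on (pencil \<alpha> \<beta> l) P"
    unfolding inj_on_pencil_iff using isolated[of l] assms(4,5) by auto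
  show "refines (pencil \<alpha> \<beta> l) (pencil \<alpha> \<beta> m) P" "refines (pencil \<alpha> \<beta> h) (pencil \<alpha> \<beta> m) P"
    using isolated assms(4,5) by (auto intro!: pencil_refines)
  show "pencil \<alpha> \<beta> h y < pencil \<alpha> \<beta> h x"
    if "pencil \<alpha> \<beta> m x = pencil \<alpha> \<beta> m y" "pencil \<alpha> \<beta> l x < pencil \<alpha> \<beta> l y" for x y
    using pencil_tie_flip[OF assms(4,5) that] .
qed

text \<open>Sweeping \<open>s\<close> from \<open>l\<close> to \<open>h\<close>, the order of \<open>P\<close> under \<open>pencil \<alpha> \<beta> s\<close> changes only at the
  finitely many crossings; cut \<open>[l, h]\<close> just after the first one and induct on their number.\<close>
lemma card_lower_half_pencil_eq:
  assumes "finite P" "A \<subseteq> P" "even (card P)"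
  shows "l < h \<Longrightarrow> inj_on (pencil \<alpha> \<beta> l) P \<Longrightarrow> inj_on (pencil \<alpha> \<beta> h) P \<Longrightarrow>
    (\<And>s. l \<le> s \<Longrightarrow> s \<le> h \<Longrightarrow> no_triple_ties (pencil \<alpha> \<beta> s) P) \<Longrightarrow>
    (\<And>s. l \<le> s \<Longrightarrow> s \<le> h \<Longrightarrow> median_ties_closed A (pencil \<alpha> \<beta> s) P) \<Longrightarrow>
    card (A \<inter> lower_half (pencil \<alpha> \<beta> l) P) = card (A \<inter> lower_half (pencil \<alpha> \<beta> h) P)"
proof (induction "card (crossings \<alpha> \<beta> P \<inter> {l<..<h})" arbitrary: l rule: less_induct)
  case less
  note lh = less.prems(1) and inj_l = less.prems(2) and inj_h = less.prems(3)
  define X where "X = crossings \<alpha> \<beta> P \<inter> {l<..<h}"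
  have "\<alpha> x \<noteq> \<alpha> y \<or> \<beta> x \<noteq> \<beta> y" if "x \<in> P" "y \<in> P" "x \<noteq> y" for x y
    using inj_l that unfolding inj_on_def pencil_def by auto
  then have fin_X: "finite X" unfolding X_def using finite_crossings[OF assms(1)] by blast
  have "l \<notin> crossings \<alpha> \<beta> P" "h \<notin> crossings \<alpha> \<beta> P"
    using inj_l inj_h by (simp_all add: inj_on_pencil_iff)
  then have crossing_in_X: "t \<in> X" if "l \<le> t" "t \<le> h" "t \<in> crossings \<alpha> \<beta> P" for t
    using that unfolding X_def by (auto simp: less_le)
  show ?case
  proof (cases "X = {}")
    case True
    show ?thesis
    proof (rule card_lower_half_pencil_step[OF assms, of l "(l + h) / 2" h])
      show "l < (l + h) / 2" "(l + h) / 2 < h" using lh by simp_all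
      show "t = (l + h) / 2" if "l \<le> t" "t \<le> h" "t \<in> crossings \<alpha> \<beta> P" for t
        using crossing_in_X[OF that] True by simp
      show "no_triple_ties (pencil \<alpha> \<beta> ((l + h) / 2)) P"
        using less.prems(4)[of "(l + h) / 2"] lh by simp
      show "median_ties_closed A (pencil \<alpha> \<beta> ((l + h) / 2)) P"
        using less.prems(5)[of "(l + h) / 2"] lh by simp
    qed
  next
    case False
    define m where "m = Min X"
    have m: "m \<in> X" "\<And>t. t \<in> X \<Longrightarrow> m \<le> t" unfolding m_def using fin_X False by simp_all
    then have "l < m" "m < h" unfolding X_def by auto
    obtain s where "m < s" "s < h" and gap: "\<And>t. t \<in> X \<Longrightarrow> m < t \<Longrightarrow> s < t"
      using finite_gap_above[OF fin_X \<open>m < h\<close>] by blast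
    have isolated: "t = m" if "l \<le> t" "t \<le> s" "t \<in> crossings \<alpha> \<beta> P" for t
    proof -
      have "t \<in> X" using crossing_in_X that \<open>s < h\<close> by simp
      then show ?thesis using gap[of t] m(2)[of t] that(2) by fastforce
    qed
    have "card (A \<inter> lower_half (pencil \<alpha> \<beta> l) P) = card (A \<inter> lower_half (pencil \<alpha> \<beta> s) P)"
      by (rule card_lower_half_pencil_step[OF assms \<open>l < m\<close> \<open>m < s\<close> isolated])
        (use less.prems(4)[of m] less.prems(5)[of m] \<open>l < m\<close> \<open>m < h\<close> in simp_all)
    also have "\<dots> = card (A \<inter> lower_half (pencil \<alpha> \<beta> h) P)"
    proof (rule less.hyps)
      have "crossings \<alpha> \<beta> P \<inter> {s<..<h} \<subseteq> X" unfolding X_def using \<open>l < m\<close> \<open>m < s\<close> by auto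
      moreover have "m \<notin> crossings \<alpha> \<beta> P \<inter> {s<..<h}" using \<open>m < s\<close> by simp
      ultimately have "crossings \<alpha> \<beta> P \<inter> {s<..<h} \<subset> X" using m(1) by blast
      then show "card (crossings \<alpha> \<beta> P \<inter> {s<..<h}) < card (crossings \<alpha> \<beta> P \<inter> {l<..<h})"
        using psubset_card_mono[OF fin_X] unfolding X_def by blast
      show "inj_on (pencil \<alpha> \<beta> s) P"
        unfolding inj_on_pencil_iff using isolated[of s] \<open>l < m\<close> \<open>m < s\<close> by auto
      show "s < h" "inj_on (pencil \<alpha> \<beta> h) P" using \<open>s < h\<close> inj_h by simp_all
      show "no_triple_ties (pencil \<alpha> \<beta> t) P" "median_ties_closed A (pencil \<alpha> \<beta> t) P"
        if "s \<le> t" "t \<le> h" for t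
        using less.prems(4,5)[of t] that \<open>l < m\<close> \<open>m < s\<close> by simp_all
    qed
    finally show ?thesis .
  qed
qed

section \<open>Linear functionals on the plane\<close>

definition dot :: "point \<Rightarrow> point \<Rightarrow> real" where
  "dot w p = fst w * fst p + snd w * snd p"

definition cross :: "point \<Rightarrow> point \<Rightarrow> real" where
  "cross u v = fst u * snd v - snd u * fst v"

definition perp :: "point \<Rightarrow> point" where
  "perp u = (- snd u, fst u)"

lemma general_positionD:
  assumes "general_position P" "a \<in> P" "b \<in> P" "c \<in> P" "a \<noteq> b" "a \<noteq> c" "b \<noteq> c"
  shows "orient a b c \<noteq> 0"
  using assms unfolding general_position_def by blast

lemma pencil_dot: "pencil (dot u) (dot d) s = dot (fst u + s * fst d, snd u + s * snd d)"
  unfolding pencil_def dot_def by (simp add: fun_eq_iff algebra_simps)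

lemma orient_proportional_to_level:
  assumes "w \<noteq> (0, 0)" "p \<noteq> q" "dot w p = dot w q"
  shows "\<exists>k. k \<noteq> 0 \<and> (\<forall>c. orient p q c = k * (dot w c - dot w p))"
proof -
  obtain w1 w2 where w: "w = (w1, w2)" by (cases w)
  define X1 X2 where "X1 = fst q - fst p" and "X2 = snd q - snd p"
  define k N where "k = w2 * X1 - w1 * X2" and "N = w1\<^sup>2 + w2\<^sup>2"
  have level: "w1 * X1 + w2 * X2 = 0"
    using assms(3) unfolding dot_def w X1_def X2_def by (simp add: algebra_simps)
  have "N > 0" unfolding N_def using assms(1) w by (auto simp: sum_power2_gt_zero_iff)
  have "orient p q c * N = k * (dot w c - dot w p)" for c
    using level unfolding orient_def N_def k_def dot_def w X1_def X2_def by simp algebra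
  then have orient: "orient p q c = k / N * (dot w c - dot w p)" for c
    using \<open>N > 0\<close> by (simp add: field_simps)
  have "k \<noteq> 0"
  proof
    assume "k = 0"
    then have "X1 * N = 0" "X2 * N = 0" using level unfolding k_def N_def by algebra+
    then have "p = q" using \<open>N > 0\<close> unfolding X1_def X2_def by (simp add: prod_eq_iff)
    then show False using assms(2) by simp
  qed
  then show ?thesis using orient \<open>N > 0\<close> by (intro exI[of _ "k / N"]) simp
qed

lemma orient_eq_zero_if_same_level:
  assumes "w \<noteq> (0, 0)" "dot w p = dot w q" "dot w p = dot w c"
  shows "orient p q c = 0"
proof (cases "p = q")
  case True then show ?thesis unfolding orient_def by simp
next
  case False
  then obtain k where "\<forall>c. orient p q c = k * (dot w c - dot w p)"
    using orient_proportional_to_level[OF assms(1) False assms(2)] by blast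
  then have "orient p q c = k * (dot w c - dot w p)" by blast
  then show ?thesis using assms(3) by simp
qed

lemma no_triple_ties_dot:
  assumes "general_position P" "w \<noteq> (0, 0)"
  shows "no_triple_ties (dot w) P"
proof -
  have False if "x \<in> P" "y \<in> P" "z \<in> P" "x \<noteq> y" "x \<noteq> z" "y \<noteq> z"
    and "dot w x = dot w y" "dot w x = dot w z" for x y z
    using general_positionD[OF assms(1) that(1-6)]
      orient_eq_zero_if_same_level[OF assms(2) that(7,8)] by blast
  then show ?thesis unfolding no_triple_ties_def by blast
qed

lemma halving_line_of_median_tie:
  assumes "finite P" "general_position P" "w \<noteq> (0, 0)" "p \<in> P" "q \<in> P" "p \<noteq> q"
    and "dot w p = dot w q" "2 * rank (dot w) P p + 2 = card P"
  shows "halving_line P p q"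
proof -
  obtain k where "k \<noteq> 0" and orient: "\<And>c. orient p q c = k * (dot w c - dot w p)"
    using orient_proportional_to_level[OF assms(3,6,7)] by blast
  define Lo Hi where "Lo = {c\<in>P. dot w c < dot w p}" and "Hi = {c\<in>P. dot w p < dot w c}"
  have "dot w c = dot w p \<longleftrightarrow> c = p \<or> c = q" if "c \<in> P" for c
  proof
    assume "dot w c = dot w p"
    then have "orient p q c = 0" using orient[of c] by simp
    then show "c = p \<or> c = q" using general_positionD[OF assms(2,4,5) that assms(6)] by blast
  qed (use assms(7) in auto)
  then have "card Lo + card Hi + 2 = card P"
    unfolding Lo_def Hi_def by (rule card_split_at_level[OF assms(1,4-6)])
  moreover have "2 * card Lo + 2 = card P" using assms(8) unfolding Lo_def rank_def .
  moreover have "{c\<in>P. orient p q c > 0} = (if k > 0 then Hi else Lo)"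
    and "{c\<in>P. orient p q c < 0} = (if k > 0 then Lo else Hi)"
    unfolding Lo_def Hi_def orient using \<open>k \<noteq> 0\<close> by (auto simp: zero_less_mult_iff mult_less_0_iff)
  ultimately show ?thesis unfolding halving_line_def using assms(4-6) by auto
qed

lemma median_ties_closed_dot:
  assumes "finite P" "general_position P" "w \<noteq> (0, 0)"
    and closed: "\<And>x y. halving_line P x y \<Longrightarrow> x \<in> A \<longleftrightarrow> y \<in> A"
  shows "median_ties_closed A (dot w) P"
  unfolding median_ties_closed_def
  by (intro ballI impI closed, elim conjE) (rule halving_line_of_median_tie[OF assms(1-3)])

lemma dot_perp_separates:
  assumes "u \<noteq> (0, 0)" "dot (perp u) x = dot (perp u) y" "dot u x = dot u y"
  shows "x = y"
proof -
  obtain u1 u2 where u: "u = (u1, u2)" by (cases u)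
  define D1 D2 where "D1 = fst x - fst y" and "D2 = snd x - snd y"
  have "u1 * D1 + u2 * D2 = 0" "- u2 * D1 + u1 * D2 = 0"
    using assms(2,3) unfolding dot_def perp_def u D1_def D2_def by (simp_all add: algebra_simps)
  then have "D1 * (u1\<^sup>2 + u2\<^sup>2) = 0" "D2 * (u1\<^sup>2 + u2\<^sup>2) = 0" by algebra+
  moreover have "u1\<^sup>2 + u2\<^sup>2 > 0" using assms(1) u by (auto simp: sum_power2_gt_zero_iff)
  ultimately show ?thesis unfolding D1_def D2_def by (auto simp: prod_eq_iff)
qed

lemma finite_crossings_perp:
  assumes "finite P" "u \<noteq> (0, 0)"
  shows "finite (crossings (dot (perp u)) (dot u) P)"
  by (rule finite_crossings[OF assms(1)]) (use dot_perp_separates[OF assms(2)] in blast)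

lemma exists_generic_direction:
  assumes "finite P" "u \<noteq> (0, 0)"
  shows "\<exists>w. inj_on (dot w) P \<and> cross u w \<noteq> 0"
proof -
  obtain t where "t \<notin> crossings (dot (perp u)) (dot u) P"
    using finite_crossings_perp[OF assms] ex_new_if_finite[OF infinite_UNIV_char_0] by blast
  define w where "w = (fst (perp u) + t * fst u, snd (perp u) + t * snd u)"
  have "inj_on (dot w) P"
    unfolding w_def pencil_dot[symmetric] inj_on_pencil_iff by fact
  moreover have "cross u w = (fst u)\<^sup>2 + (snd u)\<^sup>2"
    unfolding w_def cross_def perp_def by (simp add: algebra_simps power2_eq_square)
  moreover have "(fst u)\<^sup>2 + (snd u)\<^sup>2 \<noteq> 0" using assms(2) by (auto simp: prod_eq_iff)
  ultimately show ?thesis by (intro exI[of _ w] conjI) simp_all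
qed

section \<open>Half of A lies below every generic direction\<close>

text \<open>Along the segment from \<open>u\<close> to \<open>v\<close> the direction never vanishes, so every intermediate
  functional \<open>dot w\<close> has lines as level sets and the sweep lemma applies.\<close>
lemma card_lower_half_dot_sweep:
  assumes "finite P" "general_position P" "A \<subseteq> P" "even (card P)"
    and closed: "\<And>x y. halving_line P x y \<Longrightarrow> x \<in> A \<longleftrightarrow> y \<in> A"
    and "inj_on (dot u) P" "inj_on (dot v) P" "cross u v \<noteq> 0"
  shows "card (A \<inter> lower_half (dot u) P) = card (A \<inter> lower_half (dot v) P)"
proof -
  define d where "d = (fst v - fst u, snd v - snd u)"
  have ends: "pencil (dot u) (dot d) 0 = dot u" "pencil (dot u) (dot d) 1 = dot v"
    unfolding pencil_def dot_def d_def by (simp_all add: fun_eq_iff algebra_simps)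
  have nonzero: "(fst u + s * fst d, snd u + s * snd d) \<noteq> (0, 0)" for s
  proof
    assume "(fst u + s * fst d, snd u + s * snd d) = (0, 0)"
    then have "s * cross u v = 0" "(1 - s) * cross u v = 0"
      unfolding d_def cross_def prod_eq_iff by (simp_all, algebra+)
    then show False using assms(8) by simp
  qed
  have "card (A \<inter> lower_half (pencil (dot u) (dot d) 0) P) =
      card (A \<inter> lower_half (pencil (dot u) (dot d) 1) P)"
  proof (rule card_lower_half_pencil_eq[OF assms(1,3,4)])
    show "(0::real) < 1" by simp
    show "inj_on (pencil (dot u) (dot d) 0) P" "inj_on (pencil (dot u) (dot d) 1) P"
      unfolding ends using assms(6,7) .
    show "no_triple_ties (pencil (dot u) (dot d) s) P" for s
      unfolding pencil_dot by (rule no_triple_ties_dot[OF assms(2) nonzero])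
    show "median_ties_closed A (pencil (dot u) (dot d) s) P" for s
      unfolding pencil_dot by (rule median_ties_closed_dot[OF assms(1,2) nonzero closed])
  qed
  then show ?thesis unfolding ends .
qed

text \<open>Rotating the direction by a half turn, in two sweeps, exchanges the lower half of \<open>P\<close>
  with its complement, while the number of points of \<open>A\<close> in it stays the same.\<close>
lemma card_inter_lower_half_dot:
  assumes "finite P" "general_position P" "A \<subseteq> P" "even (card P)"
    and closed: "\<And>x y. halving_line P x y \<Longrightarrow> x \<in> A \<longleftrightarrow> y \<in> A"
    and "u \<noteq> (0, 0)" "inj_on (dot u) P"
  shows "2 * card (A \<inter> lower_half (dot u) P) = card A"
proof -
  obtain w where w: "inj_on (dot w) P" "cross u w \<noteq> 0"
    using exists_generic_direction[OF assms(1,6)] by blast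
  have "finite A" using finite_subset[OF assms(3,1)] .
  define u' where "u' = (- fst u, - snd u)"
  have dot_u': "dot u' = (\<lambda>x. - dot u x)" unfolding u'_def dot_def by (simp add: fun_eq_iff)
  have "inj_on (dot u') P" using assms(7) unfolding dot_u' inj_on_def by simp
  moreover have "cross w u' \<noteq> 0" using w(2) unfolding u'_def cross_def by (simp add: algebra_simps)
  ultimately have "card (A \<inter> lower_half (dot u) P) = card (A \<inter> lower_half (dot u') P)"
    using card_lower_half_dot_sweep[OF assms(1-5) assms(7) w]
      card_lower_half_dot_sweep[OF assms(1-5) w(1)] by simp
  also have "A \<inter> lower_half (dot u') P = A - lower_half (dot u) P"
    unfolding dot_u' lower_half_uminus[OF assms(1,7,4)] using assms(3) by blast
  also have "card (A - lower_half (dot u) P) = card A - card (A \<inter> lower_half (dot u) P)"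
    by (rule card_Diff_subset_Int) (simp add: \<open>finite A\<close>)
  moreover have "card (A \<inter> lower_half (dot u) P) \<le> card A"
    by (rule card_mono) (simp_all add: \<open>finite A\<close>)
  ultimately show ?thesis by arith
qed

section \<open>Halving lines of A\<close>

lemma orient_eq_dot_perp:
  "orient a b c =
    dot (perp (fst b - fst a, snd b - snd a)) c - dot (perp (fst b - fst a, snd b - snd a)) a"
  unfolding orient_def dot_def perp_def by (simp add: algebra_simps)

lemma exists_direction_refining_orient:
  assumes "finite P" "a \<noteq> b"
  shows "\<exists>w. inj_on (dot w) P \<and> refines (dot w) (orient a b) P"
proof -
  define d where "d = (fst b - fst a, snd b - snd a)"
  have "d \<noteq> (0, 0)" using assms(2) unfolding d_def by (auto simp: prod_eq_iff)
  let ?F = "pencil (dot (perp d)) (dot d)"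
  obtain s where "0 < s"
    and gap: "\<And>t. t \<in> crossings (dot (perp d)) (dot d) P \<Longrightarrow> 0 < t \<Longrightarrow> s < t"
    using finite_gap_above[OF finite_crossings_perp[OF assms(1) \<open>d \<noteq> (0, 0)\<close>], of 0 1] by auto
  have "inj_on (?F s) P" unfolding inj_on_pencil_iff using gap[of s] \<open>0 < s\<close> by auto
  moreover have "refines (?F s) (?F 0) P"
    using gap \<open>0 < s\<close> by (intro pencil_refines) force
  then have "refines (?F s) (orient a b) P"
    unfolding refines_def orient_eq_dot_perp d_def[symmetric] pencil_def by simp
  ultimately show ?thesis unfolding pencil_dot by blast
qed

lemma orient_eq_zero_iff:
  assumes "general_position X" "a \<in> X" "b \<in> X" "c \<in> X" "a \<noteq> b"
  shows "orient a b c = 0 \<longleftrightarrow> c = a \<or> c = b"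
  using general_positionD[OF assms(1-4) assms(5)] unfolding orient_def by auto

lemma card_below_line_transfer:
  assumes "finite P" "general_position P" "A \<subseteq> P" "even (card P)"
    and closed: "\<And>x y. halving_line P x y \<Longrightarrow> x \<in> A \<longleftrightarrow> y \<in> A"
    and "a \<in> A" "b \<in> A" "a \<noteq> b"
  defines "T \<equiv> {c\<in>P. orient a b c < 0}"
  shows "2 * card T + 2 = card P \<Longrightarrow> 2 * card {c\<in>A. orient a b c < 0} + 2 = card A"
    and "2 * card T + 2 < card P \<Longrightarrow> 2 * card {c\<in>A. orient a b c < 0} + 2 < card A"
proof -
  have "a \<in> P" "b \<in> P" using assms(3,6,7) by auto
  obtain w where inj: "inj_on (dot w) P" and ref: "refines (dot w) (orient a b) P"
    using exists_direction_refining_orient[OF assms(1,8)] by blast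
  have "dot w a \<noteq> dot w b" using inj \<open>a \<in> P\<close> \<open>b \<in> P\<close> assms(8) unfolding inj_on_def by blast
  then have "w \<noteq> (0, 0)" unfolding dot_def by auto
  have half: "2 * card (A \<inter> lower_half (dot w) P) = card A"
    by (rule card_inter_lower_half_dot[OF assms(1-5) \<open>w \<noteq> (0, 0)\<close> inj])
  have sub: "{c\<in>A. orient a b c < 0} = A \<inter> T" unfolding T_def using assms(3) by blast
  have transfer: "(2 * card T + 2 = card P \<longrightarrow> 2 * card (A \<inter> T) + 2 = card A) \<and>
      (2 * card T + 2 < card P \<longrightarrow> 2 * card (A \<inter> T) + 2 < card A)"
    if xy: "{x, y} = {a, b}" "dot w x < dot w y" for x y
  proof -
    have "x \<in> A" "y \<in> A" "orient a b x = 0" using xy(1) assms(6,7)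
      by (auto simp: doubleton_eq_iff orient_def)
    have "orient a b c = orient a b x \<longleftrightarrow> c = x \<or> c = y" if "c \<in> P" for c
      using orient_eq_zero_iff[OF assms(2) \<open>a \<in> P\<close> \<open>b \<in> P\<close> that assms(8)] \<open>orient a b x = 0\<close> xy(1)
      by (auto simp: doubleton_eq_iff)
    note below = card_inter_below_level[OF assms(1,3) ref \<open>x \<in> A\<close> \<open>y \<in> A\<close> xy(2) this half]
    show ?thesis using below \<open>orient a b x = 0\<close> unfolding T_def by simp
  qed
  have "{a, b} = {a, b} \<and> dot w a < dot w b \<or> {b, a} = {a, b} \<and> dot w b < dot w a"
    using \<open>dot w a \<noteq> dot w b\<close> by (auto simp: insert_commute)
  then show "2 * card T + 2 = card P \<Longrightarrow> 2 * card {c\<in>A. orient a b c < 0} + 2 = card A"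
    and "2 * card T + 2 < card P \<Longrightarrow> 2 * card {c\<in>A. orient a b c < 0} + 2 < card A"
    unfolding sub using transfer by blast+
qed

lemma general_position_subset: "general_position P \<Longrightarrow> A \<subseteq> P \<Longrightarrow> general_position A"
  unfolding general_position_def by blast

lemma orient_swap_less_0_iff: "orient b a c < 0 \<longleftrightarrow> 0 < orient a b c"
  unfolding orient_def by (simp add: algebra_simps)

lemma card_below_above_line:
  assumes "finite X" "general_position X" "a \<in> X" "b \<in> X" "a \<noteq> b"
  shows "card {c\<in>X. orient a b c < 0} + card {c\<in>X. orient b a c < 0} + 2 = card X"
  unfolding orient_swap_less_0_iff[of b a]
  by (rule card_split_at_level[OF assms(1,3-5)])
    (simp add: orient_eq_zero_iff[OF assms(2-4) _ assms(5)])

lemma halving_line_iff_card_below: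
  assumes "finite X" "general_position X" "a \<in> X" "b \<in> X" "a \<noteq> b"
  shows "halving_line X a b \<longleftrightarrow> 2 * card {c\<in>X. orient a b c < 0} + 2 = card X"
  using card_below_above_line[OF assms] assms(3-5)
  unfolding halving_line_def orient_swap_less_0_iff[of b a] by auto

lemma halving_line_subset_iff:
  assumes "finite P" "general_position P" "A \<subseteq> P" "even (card P)"
    and closed: "\<And>x y. halving_line P x y \<Longrightarrow> x \<in> A \<longleftrightarrow> y \<in> A"
    and "a \<in> A" "b \<in> A"
  shows "halving_line A a b \<longleftrightarrow> halving_line P a b"
proof (cases "a = b")
  case True
  then show ?thesis unfolding halving_line_def by simp
next
  case False
  have "a \<in> P" "b \<in> P" using assms(3,6,7) by auto
  have "finite A" "general_position A"
    using finite_subset[OF assms(3,1)] general_position_subset[OF assms(2,3)] .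
  define nP mP nA mA
    where "nP = card {c\<in>P. orient a b c < 0}" and "mP = card {c\<in>P. orient b a c < 0}"
    and "nA = card {c\<in>A. orient a b c < 0}" and "mA = card {c\<in>A. orient b a c < 0}"
  have "nP + mP + 2 = card P" "nA + mA + 2 = card A"
    unfolding nP_def mP_def nA_def mA_def
    using card_below_above_line[OF assms(1,2) \<open>a \<in> P\<close> \<open>b \<in> P\<close> False]
      card_below_above_line[OF \<open>finite A\<close> \<open>general_position A\<close> assms(6,7) False] by simp_all
  moreover note ab = card_below_line_transfer[OF assms(1-7) False, folded nP_def nA_def]
    and ba = card_below_line_transfer[OF assms(1-5,7,6) False[symmetric], folded mP_def mA_def]
  \<comment> \<open>if more than half of \<open>P\<close> lies on the negative side of \<open>ab\<close>, apply the transfer to \<open>ba\<close>\<close>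
  ultimately have "2 * nA + 2 = card A \<longleftrightarrow> 2 * nP + 2 = card P"
    by (cases "2 * nP + 2" "card P" rule: linorder_cases) auto
  then show ?thesis
    unfolding nP_def nA_def
    using halving_line_iff_card_below[OF assms(1,2) \<open>a \<in> P\<close> \<open>b \<in> P\<close> False]
      halving_line_iff_card_below[OF \<open>finite A\<close> \<open>general_position A\<close> assms(6,7) False] by simp
qed

section \<open>Unions of components\<close>

lemma halving_line_sym: "halving_line P a b \<Longrightarrow> halving_line P b a"
  using orient_swap_less_0_iff[of a b] orient_swap_less_0_iff[of b a]
  unfolding halving_line_def by auto

lemma component_subset: "x \<in> P \<Longrightarrow> component P x \<subseteq> P"
proof
  fix y assume "x \<in> P" "y \<in> component P x"
  then have "(underlying_adj P)\<^sup>*\<^sup>* x y" unfolding component_def by simp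
  then show "y \<in> P"
    by (induction rule: rtranclp_induct)
      (use \<open>x \<in> P\<close> in \<open>auto simp: underlying_adj_def halving_line_def\<close>)
qed

lemma component_halving_closed:
  "halving_line P y z \<Longrightarrow> y \<in> component P x \<Longrightarrow> z \<in> component P x"
  unfolding component_def underlying_adj_def by (simp add: rtranclp.rtrancl_into_rtrancl)

lemma Union_components_halving_closed:
  assumes "\<C> \<subseteq> components P" "halving_line P x y"
  shows "x \<in> \<Union>\<C> \<longleftrightarrow> y \<in> \<Union>\<C>"
  using assms component_halving_closed[OF assms(2)]
    component_halving_closed[OF halving_line_sym[OF assms(2)]]
  unfolding components_def by blast

theorem mainTheorem5:
  fixes P A :: "point set" and \<C> :: "point set set"
  assumes "finite P" and "general_position P" and "even (card P)"
    and "\<C> \<subseteq> components P" and "A = \<Union>\<C>"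
  shows "even (card A) \<and>
         (\<forall>a\<in>A. \<forall>b\<in>A. halving_line A a b \<longleftrightarrow> halving_line P a b) \<and>
         (\<forall>a\<in>A. \<forall>b\<in>A. underlying_adj A a b \<longleftrightarrow> underlying_adj P a b)"
proof -
  have "A \<subseteq> P" using assms(4,5) component_subset unfolding components_def by blast
  have closed: "\<And>x y. halving_line P x y \<Longrightarrow> x \<in> A \<longleftrightarrow> y \<in> A"
    using Union_components_halving_closed[OF assms(4)] assms(5) by blast
  obtain u where u: "inj_on (dot u) P" "cross (1, 0) u \<noteq> 0"
    using exists_generic_direction[OF assms(1), of "(1, 0)"] by auto
  then have "u \<noteq> (0, 0)" unfolding cross_def by auto
  have "2 * card (A \<inter> lower_half (dot u) P) = card A"
    using card_inter_lower_half_dot[OF assms(1,2) \<open>A \<subseteq> P\<close> assms(3) closed \<open>u \<noteq> (0, 0)\<close> u(1)] .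
  then have "even (card A)" by (metis dvd_triv_left)
  moreover have "\<forall>a\<in>A. \<forall>b\<in>A. halving_line A a b \<longleftrightarrow> halving_line P a b"
    using halving_line_subset_iff[OF assms(1,2) \<open>A \<subseteq> P\<close> assms(3) closed] by blast
  ultimately show ?thesis unfolding underlying_adj_def by blast
qed

end
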